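(* For every $\Delta > 0$ there exists a constant $c > 0$ such that the following holds for all sufficiently large $M$. Let $|\Psi_1\rangle$ be any normalized state of $M$ qubits that is a linear combination of tensor products $|s_1\rangle\otimes\cdots\otimes|s_M\rangle$ with each $|s_i\rangle\in\{|+\rangle,|-\rangle\}$, where every term appearing with nonzero coefficient has at most $r = cM$ factors equal to $|-\rangle$. Then measuring $|\Psi_1\rangle$ in the computational basis $\{|0\rangle,|1\rangle\}^{\otimes M}$ yields, with high probability, an outcome string $y\in\{0,1\}^M$ whose Hamming weight lies between $M(1/2-\Delta)$ and $M(1/2+\Delta)$. Here "with high probability" means that the probability of obtaining a string of weight outside this range is bounded by a quantity independent of the particular state $|\Psi_1\rangle$ that tends to $0$ as $M\to\infty$.
   Context: The single-qubit states are $|\pm\rangle = (|0\rangle \pm |1\rangle)/\sqrt{2}$, so that $|0\rangle = (|+\rangle+|-\rangle)/\sqrt{2}$ and $|1\rangle = (|+\rangle-|-\rangle)/\sqrt{2}$. The Hamming weight of $y\in\{0,1\}^M$ is the number of coordinates equal to $1$. Measuring in the computational basis gives outcome $y$ with probability $|\langle y|\Psi_1\rangle|^2$. *)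

theory Defs
  imports "HOL-Analysis.Analysis"
begin

text \<open>Computational basis strings y in {0,1}^M are encoded as subsets Y of {..<M}
 (the positions where y_i = 1); the Hamming weight of y is card Y.
 Likewise a product |s_1> ... |s_M> with s_i in {+,-} is encoded by the set S
 of positions carrying |->.\<close>

definition bitstrings :: "nat \<Rightarrow> nat set set" where
  "bitstrings M = Pow {..<M}"

text \<open>Single-qubit amplitude <b|s> with b = 1 iff bit1, s = |-> iff minus.\<close>
definition ket_pm_amp :: "bool \<Rightarrow> bool \<Rightarrow> complex" where
  "ket_pm_amp b m = (if b \<and> m then - 1 else 1) / complex_of_real (sqrt 2)"

definition pm_product :: "nat \<Rightarrow> nat set \<Rightarrow> nat set \<Rightarrow> complex" where
  "pm_product M S Y = (\<Prod>i<M. ket_pm_amp (i \<in> Y) (i \<in> S))"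

definition pm_state :: "nat \<Rightarrow> (nat set \<Rightarrow> complex) \<Rightarrow> nat set \<Rightarrow> complex" where
  "pm_state M a Y = (\<Sum>S\<in>bitstrings M. a S * pm_product M S Y)"

definition normalized :: "nat \<Rightarrow> (nat set \<Rightarrow> complex) \<Rightarrow> bool" where
  "normalized M \<psi> \<longleftrightarrow> (\<Sum>Y\<in>bitstrings M. (cmod (\<psi> Y))\<^sup>2) = 1"

definition outcome_prob :: "nat \<Rightarrow> (nat set \<Rightarrow> complex) \<Rightarrow> nat set \<Rightarrow> real" where
  "outcome_prob M \<psi> Y = (cmod (\<psi> Y))\<^sup>2"

end

theory Submission
  imports Defs
begin

text \<open>The product states of the |+>/|-> basis are orthonormal and each has all
  computational amplitudes of modulus 2^(-M/2). So if the coefficients a_S are supported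
  on a family A of sets, Cauchy-Schwarz and Parseval bound every outcome probability by
  card A / 2^M. Weighting each set S by z^|S| and summing over all subsets (a Chernoff
  bound) shows that at most ((1 + z) / z^c)^M sets have at most cM elements; for suitable
  z and small c this base is arbitrarily close to 1. The same bound with z = 1 - d, together
  with complementation, shows that at most 2 q^M strings have weight outside
  M(1/2 -+ d), with q < 2. Hence the unbalanced outcomes have total probability at most
  2 (q (1 + z) / (2 z^c))^M, which tends to 0.\<close>

lemma sum_Pow_prod_mem:
  fixes f :: "'a \<Rightarrow> bool \<Rightarrow> 'c::comm_semiring_1"
  assumes "finite I"
  shows "(\<Sum>Y\<in>Pow I. \<Prod>i\<in>I. f i (i \<in> Y)) = (\<Prod>i\<in>I. f i False + f i True)"
proof -
  have "(\<Prod>i\<in>I. f i True + f i False) = (\<Sum>Y\<in>Pow I. (\<Prod>i\<in>Y. f i True) * (\<Prod>i\<in>I - Y. f i False))"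
    by (rule prod_add[OF assms])
  also have "\<dots> = (\<Sum>Y\<in>Pow I. \<Prod>i\<in>I. f i (i \<in> Y))"
  proof (rule sum.cong[OF refl])
    fix Y assume "Y \<in> Pow I"
    then have "(\<Prod>i\<in>I. f i (i \<in> Y)) = (\<Prod>i\<in>Y. f i (i \<in> Y)) * (\<Prod>i\<in>I - Y. f i (i \<in> Y))"
      using assms by (metis PowD Int_absorb1 prod.Int_Diff)
    then show "(\<Prod>i\<in>Y. f i True) * (\<Prod>i\<in>I - Y. f i False) = (\<Prod>i\<in>I. f i (i \<in> Y))"
      by simp
  qed
  finally show ?thesis
    by (simp add: add.commute)
qed

lemma sum_Pow_power_card:
  fixes z :: "'a::comm_semiring_1"
  assumes "finite I"
  shows "(\<Sum>S\<in>Pow I. z ^ card S) = (1 + z) ^ card I"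
  using prod_add[OF assms, of "\<lambda>_. z" "\<lambda>_. 1"] by (simp add: add.commute)

lemma card_subsets_card_le_powr:
  fixes z t :: real
  assumes I: "finite I" and z: "0 < z" "z \<le> 1"
  shows "real (card {S\<in>Pow I. real (card S) \<le> t}) \<le> (1 + z) ^ card I / z powr t"
proof -
  let ?C = "{S\<in>Pow I. real (card S) \<le> t}"
  have "z powr t \<le> z ^ card S" if "S \<in> ?C" for S
    using that z by (auto simp flip: powr_realpow intro: powr_mono')
  then have "real (card ?C) \<le> (\<Sum>S\<in>?C. z ^ card S / z powr t)"
    using z by (subst card_eq_sum, subst of_nat_sum) (intro sum_mono, simp)
  also have "\<dots> \<le> (\<Sum>S\<in>Pow I. z ^ card S / z powr t)"
    using I z by (intro sum_mono2) auto
  also have "\<dots> = (1 + z) ^ card I / z powr t"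
    using I by (simp add: sum_divide_distrib[symmetric] sum_Pow_power_card)
  finally show ?thesis .
qed

lemma card_subsets_card_le_fraction:
  fixes z c :: real
  assumes "finite I" "0 < z" "z \<le> 1"
  shows "real (card {S\<in>Pow I. real (card S) \<le> c * real (card I)}) \<le> ((1 + z) / z powr c) ^ card I"
proof -
  have "z powr (c * real (card I)) = (z powr c) ^ card I"
    using assms by (simp add: powr_powr[symmetric] powr_realpow)
  then show ?thesis
    using card_subsets_card_le_powr[OF assms, of "c * real (card I)"] by (simp add: power_divide)
qed

lemma card_subsets_card_ge_eq:
  assumes "finite I"
  shows "card {S\<in>Pow I. t \<le> real (card S)} = card {S\<in>Pow I. real (card S) \<le> real (card I) - t}"
proof (rule bij_betw_same_card[of "\<lambda>S. I - S"], rule bij_betw_byWitness[where f' = "\<lambda>S. I - S"])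
  have "real (card (I - S)) = real (card I) - real (card S)" if "S \<subseteq> I" for S
    using that assms by (simp add: card_Diff_subset finite_subset card_mono)
  then show "(\<lambda>S. I - S) ` {S\<in>Pow I. t \<le> real (card S)} \<subseteq> {S\<in>Pow I. real (card S) \<le> real (card I) - t}"
    and "(\<lambda>S. I - S) ` {S\<in>Pow I. real (card S) \<le> real (card I) - t} \<subseteq> {S\<in>Pow I. t \<le> real (card S)}"
    by auto
qed auto

lemma card_unbalanced_subsets:
  fixes d :: real
  assumes I: "finite I" and d: "0 < d" "d \<le> 1/2"
  shows "real (card {S\<in>Pow I. real (card S) \<le> (1/2 - d) * real (card I)
                            \<or> (1/2 + d) * real (card I) \<le> real (card S)})
         \<le> 2 * ((2 - d) / (1 - d) powr (1/2 - d)) ^ card I"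
proof -
  let ?n = "real (card I)"
  let ?L = "{S\<in>Pow I. real (card S) \<le> (1/2 - d) * ?n}"
  let ?U = "{S\<in>Pow I. (1/2 + d) * ?n \<le> real (card S)}"
  have "?L \<union> ?U = {S\<in>Pow I. real (card S) \<le> (1/2 - d) * ?n \<or> (1/2 + d) * ?n \<le> real (card S)}"
    by blast
  moreover have "card ?U = card ?L"
    unfolding card_subsets_card_ge_eq[OF I] by (simp add: algebra_simps)
  then have "real (card (?L \<union> ?U)) \<le> 2 * real (card ?L)"
    using card_Un_le[of ?L ?U] by linarith
  moreover have "real (card ?L) \<le> ((2 - d) / (1 - d) powr (1/2 - d)) ^ card I"
    using card_subsets_card_le_fraction[OF I, of "1 - d" "1/2 - d"] d by simp
  ultimately show ?thesis
    by simp
qed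

lemma lower_tail_base_lt_two:
  fixes d :: real
  assumes d: "0 < d" "d \<le> 1/2"
  shows "(2 - d) / (1 - d) powr (1/2 - d) < 2"
proof -
  let ?b = "1/2 - d"
  have pos: "0 < 1 - d" using d by simp
  have "ln (1 / (1 - d)) \<le> 1 / (1 - d) - 1"
    using pos by (intro ln_le_minus_one) simp
  then have ln_ge: "- (d / (1 - d)) \<le> ln (1 - d)"
    using pos by (simp add: ln_div field_simps)
  have "1 + ?b * ln (1 - d) \<le> (1 - d) powr ?b"
    using pos exp_ge_add_one_self[of "?b * ln (1 - d)"] by (simp add: powr_def mult.commute)
  moreover have "?b * (- (d / (1 - d))) \<le> ?b * ln (1 - d)"
    using d ln_ge by (intro mult_left_mono) auto
  ultimately have "1 + ?b * (- (d / (1 - d))) \<le> (1 - d) powr ?b"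
    by (meson add_left_mono order_trans)
  moreover have "2 - d < 2 * (1 + ?b * (- (d / (1 - d))))"
    using d pos by (simp add: field_simps)
  ultimately have "2 - d < 2 * (1 - d) powr ?b"
    by (meson less_le_trans mult_left_mono zero_le_numeral)
  then show ?thesis
    using pos by (simp add: field_simps)
qed

lemma exists_small_fraction_base:
  fixes \<rho> :: real
  assumes "1 < \<rho>"
  shows "\<exists>z c. 0 < z \<and> z \<le> 1 \<and> 0 < c \<and> (1 + z) / z powr c < \<rho>"
proof -
  \<comment> \<open>z makes (1 + z) w = \<rho> with w = (\<rho> + 1) / 2 > 1, and c makes z powr c = 1 / sqrt w.\<close>
  define z where "z = (\<rho> - 1) / (\<rho> + 1)"
  define w where "w = (\<rho> + 1) / 2"
  define c where "c = - ln w / (2 * ln z)"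
  have z: "0 < z" "z < 1" and w: "1 < w"
    using assms by (simp_all add: z_def w_def)
  have zw: "(1 + z) * w = \<rho>"
    using assms by (simp add: z_def w_def field_simps)
  have "ln z < 0" "0 < ln w"
    using z w by simp_all
  then have c: "0 < c" and c_ln: "c * ln z = - (ln w / 2)"
    by (auto simp: c_def intro: divide_pos_neg)
  have "z powr c = exp (c * ln z)"
    using z by (simp add: powr_def mult.commute)
  then have "(1 + z) / z powr c = (1 + z) * exp (ln w / 2)"
    by (simp add: c_ln exp_minus')
  also have "\<dots> < (1 + z) * w"
    using w z exp_less_cancel_iff[of "ln w / 2" "ln w"] by (intro mult_strict_left_mono) auto
  finally have "(1 + z) / z powr c < \<rho>"
    by (simp only: zw)
  with z c show ?thesis
    by (intro exI[of _ z] exI[of _ c]) simp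
qed

lemma ket_pm_amp_real: "ket_pm_amp b m = complex_of_real ((if b \<and> m then - 1 else 1) / sqrt 2)"
  by (simp add: ket_pm_amp_def)

lemma norm_ket_pm_amp: "cmod (ket_pm_amp b m) = 1 / sqrt 2"
  unfolding ket_pm_amp_real norm_of_real by simp

lemma ket_pm_amp_orthonormal:
  "ket_pm_amp False m * cnj (ket_pm_amp False m') + ket_pm_amp True m * cnj (ket_pm_amp True m')
     = (if m = m' then 1 else 0)"
proof -
  have "(1 / sqrt 2) * (1 / sqrt 2) = (1 / 2 :: real)"
    by simp
  then show ?thesis
    unfolding ket_pm_amp_real by (cases m; cases m') (simp_all flip: of_real_mult of_real_add)
qed

lemma pm_product_orthonormal:
  assumes "S \<in> bitstrings M" "T \<in> bitstrings M"
  shows "(\<Sum>Y\<in>bitstrings M. pm_product M S Y * cnj (pm_product M T Y)) = (if S = T then 1 else 0)"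
proof -
  let ?f = "\<lambda>i b. ket_pm_amp b (i \<in> S) * cnj (ket_pm_amp b (i \<in> T))"
  have "(\<Sum>Y\<in>bitstrings M. pm_product M S Y * cnj (pm_product M T Y))
      = (\<Sum>Y\<in>Pow {..<M}. \<Prod>i<M. ?f i (i \<in> Y))"
    unfolding bitstrings_def pm_product_def by (simp add: prod.distrib)
  also have "\<dots> = (\<Prod>i<M. ?f i False + ?f i True)"
    by (rule sum_Pow_prod_mem) simp
  also have "\<dots> = (\<Prod>i<M. if (i \<in> S) = (i \<in> T) then 1 else 0)"
    by (simp add: ket_pm_amp_orthonormal)
  also have "\<dots> = (if S = T then 1 else 0)"
    using assms by (auto simp: bitstrings_def intro: prod_zero)
  finally show ?thesis .
qed

lemma norm_pm_product: "cmod (pm_product M S Y) = (1 / sqrt 2) ^ M"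
  unfolding pm_product_def by (simp add: prod_norm[symmetric] norm_ket_pm_amp)

lemma parseval_pm_state:
  "(\<Sum>Y\<in>bitstrings M. (cmod (pm_state M a Y))\<^sup>2) = (\<Sum>S\<in>bitstrings M. (cmod (a S))\<^sup>2)"
proof -
  let ?B = "bitstrings M"
  let ?p = "pm_product M"
  have "complex_of_real (\<Sum>Y\<in>?B. (cmod (pm_state M a Y))\<^sup>2) = (\<Sum>Y\<in>?B. pm_state M a Y * cnj (pm_state M a Y))"
    by (simp only: of_real_sum complex_norm_square)
  also have "\<dots> = (\<Sum>Y\<in>?B. \<Sum>S\<in>?B. \<Sum>T\<in>?B. a S * cnj (a T) * (?p S Y * cnj (?p T Y)))"
    unfolding pm_state_def cnj_sum sum_product by (intro sum.cong refl) (simp add: mult_ac)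
  also have "\<dots> = (\<Sum>S\<in>?B. \<Sum>T\<in>?B. a S * cnj (a T) * (\<Sum>Y\<in>?B. ?p S Y * cnj (?p T Y)))"
    unfolding sum_distrib_left by (subst sum.swap, rule sum.cong[OF refl], rule sum.swap)
  also have "\<dots> = (\<Sum>S\<in>?B. \<Sum>T\<in>?B. a S * cnj (a T) * (if S = T then 1 else 0))"
    by (intro sum.cong refl) (simp add: pm_product_orthonormal)
  also have "\<dots> = (\<Sum>S\<in>?B. a S * cnj (a S))"
    by (simp add: bitstrings_def if_distrib cong: if_cong)
  also have "\<dots> = complex_of_real (\<Sum>S\<in>?B. (cmod (a S))\<^sup>2)"
    by (simp only: of_real_sum complex_norm_square)
  finally show ?thesis
    using of_real_eq_iff by blast
qed

lemma outcome_prob_le_card_support: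
  assumes "normalized M (pm_state M a)"
    and supp: "\<forall>S\<in>bitstrings M. a S \<noteq> 0 \<longrightarrow> S \<in> A" and A: "A \<subseteq> bitstrings M"
  shows "outcome_prob M (pm_state M a) Y \<le> real (card A) / 2 ^ M"
proof -
  let ?u = "(1 / sqrt 2) ^ M :: real"
  have fin: "finite (bitstrings M)"
    by (simp add: bitstrings_def)
  have u2: "?u\<^sup>2 = ((1 / sqrt 2)\<^sup>2) ^ M"
    by (metis power_mult mult.commute)
  have "pm_state M a Y = (\<Sum>S\<in>A. a S * pm_product M S Y)"
    unfolding pm_state_def using fin A supp by (intro sum.mono_neutral_right) auto
  then have "cmod (pm_state M a Y) \<le> (\<Sum>S\<in>A. cmod (a S) * ?u)"
    by (metis (no_types, lifting) norm_mult norm_pm_product norm_sum sum.cong)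
  then have "(cmod (pm_state M a Y))\<^sup>2 \<le> (\<Sum>S\<in>A. cmod (a S) * ?u)\<^sup>2"
    by (simp add: power_mono)
  also have "\<dots> \<le> (\<Sum>S\<in>A. (cmod (a S))\<^sup>2) * (\<Sum>S\<in>A. ?u\<^sup>2)"
    by (rule Cauchy_Schwarz_ineq_sum)
  also have "\<dots> \<le> (\<Sum>S\<in>bitstrings M. (cmod (a S))\<^sup>2) * (\<Sum>S\<in>A. ?u\<^sup>2)"
    using fin A by (intro mult_right_mono sum_mono2) auto
  also have "\<dots> = real (card A) / 2 ^ M"
    using assms(1) u2 by (simp add: parseval_pm_state normalized_def power_divide)
  finally show ?thesis
    by (simp add: outcome_prob_def)
qed

lemma prob_unbalanced_outcome_le:
  fixes d z c :: real
  assumes d: "0 < d" "d \<le> 1/2" and z: "0 < z" "z \<le> 1"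
    and normed: "normalized M (pm_state M a)"
    and supp: "\<forall>S\<in>bitstrings M. a S \<noteq> 0 \<longrightarrow> real (card S) \<le> c * real M"
  shows "(\<Sum>Y\<in>{Y\<in>bitstrings M. real (card Y) \<le> (1/2 - d) * real M \<or> (1/2 + d) * real M \<le> real (card Y)}.
            outcome_prob M (pm_state M a) Y)
         \<le> 2 * ((2 - d) / (1 - d) powr (1/2 - d) * ((1 + z) / z powr c) / 2) ^ M"
proof -
  let ?q = "(2 - d) / (1 - d) powr (1/2 - d)" and ?g = "(1 + z) / z powr c"
  define A where "A = {S\<in>bitstrings M. real (card S) \<le> c * real M}"
  define B where "B = {Y\<in>bitstrings M. real (card Y) \<le> (1/2 - d) * real M \<or> (1/2 + d) * real M \<le> real (card Y)}"
  have "(\<Sum>Y\<in>B. outcome_prob M (pm_state M a) Y) \<le> real (card B) * (real (card A) / 2 ^ M)"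
    using outcome_prob_le_card_support[OF normed, of A] supp
    by (intro sum_bounded_above) (auto simp: A_def)
  also have "\<dots> \<le> (2 * ?q ^ M) * (?g ^ M / 2 ^ M)"
  proof (intro mult_mono divide_right_mono)
    show "real (card B) \<le> 2 * ?q ^ M"
      using card_unbalanced_subsets[of "{..<M}" d] d by (simp add: B_def bitstrings_def)
    show "real (card A) \<le> ?g ^ M"
      using card_subsets_card_le_fraction[of "{..<M}" z c] z by (simp add: A_def bitstrings_def)
  qed (use d z in auto)
  also have "\<dots> = 2 * (?q * ?g / 2) ^ M"
    by (simp add: power_mult_distrib power_divide)
  finally show ?thesis
    by (simp add: B_def)
qed

lemma sum_unbalanced_outcome_prob_mono:
  fixes d \<Delta> :: real
  assumes "d \<le> \<Delta>"
  shows "(\<Sum>Y\<in>{Y\<in>bitstrings M. real (card Y) < real M * (1/2 - \<Delta>) \<or> real (card Y) > real M * (1/2 + \<Delta>)}.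
            outcome_prob M \<psi> Y)
         \<le> (\<Sum>Y\<in>{Y\<in>bitstrings M. real (card Y) \<le> (1/2 - d) * real M \<or> (1/2 + d) * real M \<le> real (card Y)}.
            outcome_prob M \<psi> Y)"
proof -
  have "real M * (1/2 - \<Delta>) \<le> (1/2 - d) * real M" "(1/2 + d) * real M \<le> real M * (1/2 + \<Delta>)"
    using assms by (simp_all add: mult.commute[of "real M"] mult_right_mono)
  then show ?thesis
    by (intro sum_mono2) (auto simp: bitstrings_def outcome_prob_def)
qed

theorem lemma1:
  fixes \<Delta> :: real
  assumes "\<Delta> > 0"
  shows "\<exists>c::real. c > 0 \<and> (\<exists>\<epsilon> :: nat \<Rightarrow> real. \<epsilon> \<longlonglongrightarrow> 0 \<and>
    (\<forall>\<^sub>F M in sequentially. \<forall>a :: nat set \<Rightarrow> complex.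
       normalized M (pm_state M a) \<and>
       (\<forall>S\<in>bitstrings M. a S \<noteq> 0 \<longrightarrow> real (card S) \<le> c * real M)
       \<longrightarrow> (\<Sum>Y\<in>{Y\<in>bitstrings M. real (card Y) < real M * (1/2 - \<Delta>)
                                  \<or> real (card Y) > real M * (1/2 + \<Delta>)}.
              outcome_prob M (pm_state M a) Y) \<le> \<epsilon> M))"
proof -
  define d where "d = min \<Delta> (1/2)"
  define q where "q = (2 - d) / (1 - d) powr (1/2 - d)"
  have d: "0 < d" "d \<le> 1/2" "d \<le> \<Delta>"
    using assms by (auto simp: d_def)
  have q: "0 < q" "q < 2"
    using d lower_tail_base_lt_two[of d] by (auto simp: q_def)
  then obtain z c where z: "0 < z" "z \<le> 1" and c: "0 < c" and g: "(1 + z) / z powr c < 2 / q"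
    using exists_small_fraction_base[of "2 / q"] by auto
  define \<theta> where "\<theta> = q * ((1 + z) / z powr c) / 2"
  have "0 < \<theta>"
    using q z by (simp add: \<theta>_def)
  moreover have "\<theta> < 1"
    using q z g by (simp add: \<theta>_def field_simps)
  ultimately have lim: "(\<lambda>M. 2 * \<theta> ^ M) \<longlonglongrightarrow> 0"
    by (intro tendsto_mult_right_zero LIMSEQ_power_zero) simp
  have "(\<Sum>Y\<in>{Y\<in>bitstrings M. real (card Y) < real M * (1/2 - \<Delta>) \<or> real (card Y) > real M * (1/2 + \<Delta>)}.
           outcome_prob M (pm_state M a) Y) \<le> 2 * \<theta> ^ M"
    if "normalized M (pm_state M a)" "\<forall>S\<in>bitstrings M. a S \<noteq> 0 \<longrightarrow> real (card S) \<le> c * real M" for M a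
    using order_trans[OF sum_unbalanced_outcome_prob_mono[OF d(3)] prob_unbalanced_outcome_le[OF d(1,2) z that]]
    by (simp add: \<theta>_def q_def)
  then show ?thesis
    using c lim by (intro exI[of _ c] conjI exI[of _ "\<lambda>M. 2 * \<theta> ^ M"] always_eventually allI impI) auto
qed

end
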